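(* Let $N\ge3$. The set $C_N$ of valid common lines data is homeomorphic to the quotient $\mathcal G/\mathrm O(3)$ of the set of generic $N$-tuples of frames by the diagonal action of $\mathrm O(3)$.
   Context: A frame is an ordered pair $(a,b)$ of orthonormal vectors in $\mathbb R^3$. Planes $P_1=\dots=P_N=\mathbb R^2$; a frame $F_i=(a_i,b_i)$ gives the embedding $\iota_i(x,y)=xa_i+yb_i$ of $P_i$ into $\mathbb R^3$. $(F_1,\dots,F_N)$ is generic if the planes $\iota_i(P_i)$ are pairwise distinct and the lines $\iota_i(P_i)\cap\iota_j(P_j)$, $i<j$, are pairwise distinct; $\mathcal G$ is the set of generic tuples. $\mathrm O(3)$ is the group of all $3\times3$ orthogonal matrices acting by $A\cdot(F_1,\dots,F_N)=(AF_1,\dots,AF_N)$, $A(a,b)=(Aa,Ab)$. Common lines data is a collection $([v_{ij}:v_{ji}])_{1\le i<j\le N}$ with $[v_{ij}:v_{ji}]\in\mathbb P(P_i\times P_j)\cong\mathbb{RP}^3$ (nonzero pairs up to scaling) and $\|v_{ij}\|^2=\|v_{ji}\|^2$, viewed as a subset of $(\mathbb{RP}^3)^{\binom N2}$; frames realize it if $\iota_i(v_{ij})=\iota_j(v_{ji})$ for all $i<j$; it is valid if realized by some generic tuple, and $C_N$ is the set of valid data. *)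

theory Defs
  imports "HOL-Analysis.Analysis"
begin

definition quotient_topology :: "'a topology \<Rightarrow> ('a \<times> 'a) set \<Rightarrow> 'a set topology" where
  "quotient_topology X r =
     topology (\<lambda>U. U \<subseteq> (\<lambda>x. r `` {x}) ` topspace X \<and>
                   openin X {x \<in> topspace X. r `` {x} \<in> U})"

type_synonym vec3 = "real ^ 3"
type_synonym frame = "vec3 \<times> vec3"
type_synonym plane_vec = "real ^ 2"

definition is_frame :: "frame \<Rightarrow> bool" where
  "is_frame F \<longleftrightarrow> norm (fst F) = 1 \<and> norm (snd F) = 1 \<and> fst F \<bullet> snd F = 0"

definition emb :: "frame \<Rightarrow> plane_vec \<Rightarrow> vec3" where
  "emb F v = (v $ 1) *\<^sub>R fst F + (v $ 2) *\<^sub>R snd F"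

definition plane_of :: "frame \<Rightarrow> vec3 set" where
  "plane_of F = range (emb F)"

text \<open>Index set of pairs i<j among 0..N-1 (0-based indexing of the N planes).\<close>
definition pairs :: "nat \<Rightarrow> (nat \<times> nat) set" where
  "pairs N = {(i, j). i < j \<and> j < N}"

definition generic :: "nat \<Rightarrow> (nat \<Rightarrow> frame) set" where
  "generic N = {F \<in> PiE {..<N} (\<lambda>_. UNIV).
      (\<forall>i<N. is_frame (F i)) \<and>
      (\<forall>i<N. \<forall>j<N. i \<noteq> j \<longrightarrow> plane_of (F i) \<noteq> plane_of (F j)) \<and>
      (\<forall>p\<in>pairs N. \<forall>q\<in>pairs N. p \<noteq> q \<longrightarrow>
         plane_of (F (fst p)) \<inter> plane_of (F (snd p)) \<noteq>
         plane_of (F (fst q)) \<inter> plane_of (F (snd q)))}"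

definition frames_top :: "nat \<Rightarrow> (nat \<Rightarrow> frame) topology" where
  "frames_top N = product_topology (\<lambda>_. euclidean) {..<N}"

definition act :: "real^3^3 \<Rightarrow> frame \<Rightarrow> frame" where
  "act A F = (A *v fst F, A *v snd F)"

definition O3_rel :: "nat \<Rightarrow> ((nat \<Rightarrow> frame) \<times> (nat \<Rightarrow> frame)) set" where
  "O3_rel N = {(F, F'). F \<in> generic N \<and> F' \<in> generic N \<and>
      (\<exists>A. orthogonal_matrix A \<and> (\<forall>i<N. F' i = act A (F i)))}"

definition G_mod_O3 :: "nat \<Rightarrow> (nat \<Rightarrow> frame) set topology" where
  "G_mod_O3 N = quotient_topology (subtopology (frames_top N) (generic N)) (O3_rel N)"

text \<open>Proportionality of nonzero pairs; the class of (v,w) is the point [v:w].\<close>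
definition proj_rel :: "((plane_vec \<times> plane_vec) \<times> (plane_vec \<times> plane_vec)) set" where
  "proj_rel = {(x, y). x \<noteq> 0 \<and> y \<noteq> 0 \<and> (\<exists>c::real. c \<noteq> 0 \<and> y = c *\<^sub>R x)}"

definition RP3 :: "(plane_vec \<times> plane_vec) set topology" where
  "RP3 = quotient_topology (subtopology euclidean (- {0})) proj_rel"

text \<open>Ambient space (RP^3)^(N choose 2), indexed by pairs (i,j) with i<j<N.\<close>
definition CL_top :: "nat \<Rightarrow> (nat \<times> nat \<Rightarrow> (plane_vec \<times> plane_vec) set) topology" where
  "CL_top N = product_topology (\<lambda>_. RP3) (pairs N)"

definition realizes :: "nat \<Rightarrow> (nat \<Rightarrow> frame) \<Rightarrow> (nat \<times> nat \<Rightarrow> (plane_vec \<times> plane_vec) set) \<Rightarrow> bool" where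
  "realizes N F d \<longleftrightarrow>
     (\<forall>(i, j)\<in>pairs N. \<exists>(v, w)\<in>d (i, j). emb (F i) v = emb (F j) w)"

definition valid_CL :: "nat \<Rightarrow> (nat \<times> nat \<Rightarrow> (plane_vec \<times> plane_vec) set) set" where
  "valid_CL N = {d \<in> topspace (CL_top N).
      (\<forall>p\<in>pairs N. \<forall>(v, w)\<in>d p. norm v ^ 2 = norm w ^ 2) \<and>
      (\<exists>F\<in>generic N. realizes N F d)}"

end

theory Submission
  imports Defs "HOL-Analysis.Cross3"
begin

text \<open>A generic tuple of frames determines its common lines data, and the data is invariant under
O(3); this gives a continuous map from G/O(3) to C_N.  Conversely, given representatives
(v_ij, v_ji) of the data, the tuple is rebuilt up to O(3) by explicit formulas: frame 0 is
normalized to the standard frame, the point iota_1(v_12) is located by its inner products with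
iota_0(v_01) and iota_0(v_02) and by its length, and every other frame is determined by the images
of two independent vectors of its plane.  Genericity keeps all the determinants involved nonzero,
so the formulas are continuous in the representatives, and these can be chosen continuously on
affine charts of RP^3.  This gives the continuous inverse.\<close>

section \<open>Quotient topology\<close>

lemma istopology_quotient:
  "istopology (\<lambda>U. U \<subseteq> (\<lambda>x. r `` {x}) ` topspace X \<and> openin X {x \<in> topspace X. r `` {x} \<in> U})"
proof -
  have "{x \<in> topspace X. r `` {x} \<in> S \<inter> T} =
        {x \<in> topspace X. r `` {x} \<in> S} \<inter> {x \<in> topspace X. r `` {x} \<in> T}" for S T
    by auto
  moreover have "{x \<in> topspace X. r `` {x} \<in> \<Union>\<K>} = (\<Union>S\<in>\<K>. {x \<in> topspace X. r `` {x} \<in> S})" for \<K>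
    by auto
  ultimately show ?thesis
    unfolding istopology_def by (auto intro: openin_Int)
qed

lemma openin_quotient_topology:
  "openin (quotient_topology X r) U \<longleftrightarrow>
     U \<subseteq> (\<lambda>x. r `` {x}) ` topspace X \<and> openin X {x \<in> topspace X. r `` {x} \<in> U}"
  unfolding quotient_topology_def by (subst topology_inverse'[OF istopology_quotient]) (rule refl)

lemma topspace_quotient_topology:
  "topspace (quotient_topology X r) = (\<lambda>x. r `` {x}) ` topspace X"
proof (rule subset_antisym)
  show "topspace (quotient_topology X r) \<subseteq> (\<lambda>x. r `` {x}) ` topspace X"
    using openin_topspace openin_quotient_topology by blast
  have "{x \<in> topspace X. r `` {x} \<in> (\<lambda>x. r `` {x}) ` topspace X} = topspace X"
    by blast
  then show "(\<lambda>x. r `` {x}) ` topspace X \<subseteq> topspace (quotient_topology X r)"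
    by (intro openin_subset) (simp add: openin_quotient_topology)
qed

lemma quotient_map_quotient_topology:
  "quotient_map X (quotient_topology X r) (\<lambda>x. r `` {x})"
  unfolding quotient_map_def topspace_quotient_topology openin_quotient_topology by blast

lemma continuous_map_from_quotient_topology:
  assumes "continuous_map X Y (\<lambda>x. f (r `` {x}))"
  shows "continuous_map (quotient_topology X r) Y f"
  using continuous_compose_quotient_map[OF quotient_map_quotient_topology] assms
  by (simp add: o_def)

lemma continuous_map_from_open_in_quotient_topology:
  assumes "openin (quotient_topology X r) V"
    and "continuous_map (subtopology X {x \<in> topspace X. r `` {x} \<in> V}) Y (\<lambda>x. f (r `` {x}))"
  shows "continuous_map (subtopology (quotient_topology X r) V) Y f"
  using continuous_compose_quotient_map[OF quotient_map_restriction[OF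
        quotient_map_quotient_topology refl disjI1[OF assms(1)]]] assms(2)
  by (simp add: o_def)

lemma continuous_map_locally:
  assumes "\<And>x. x \<in> topspace X \<Longrightarrow> \<exists>U. openin X U \<and> x \<in> U \<and> continuous_map (subtopology X U) Y f"
  shows "continuous_map X Y f"
  unfolding continuous_map_def
proof (intro conjI allI impI)
  show "f \<in> topspace X \<rightarrow> topspace Y"
    using assms unfolding continuous_map_def by fastforce
next
  fix W assume W: "openin Y W"
  show "openin X {x \<in> topspace X. f x \<in> W}"
  proof (subst openin_subopen, intro ballI)
    fix x assume x: "x \<in> {x \<in> topspace X. f x \<in> W}"
    then obtain U where U: "openin X U" "x \<in> U" "continuous_map (subtopology X U) Y f"
      using assms by blast
    then have "openin X {y \<in> topspace (subtopology X U). f y \<in> W}"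
      using W openin_trans_full by (blast dest: openin_continuous_map_preimage)
    then show "\<exists>T. openin X T \<and> x \<in> T \<and> T \<subseteq> {x \<in> topspace X. f x \<in> W}"
      using U(2) x openin_subset[OF U(1)] by (intro exI[of _ "{y \<in> topspace (subtopology X U). f y \<in> W}"]) auto
  qed
qed

lemma continuous_map_euclidean_fst:
  "continuous_map X euclidean f \<Longrightarrow> continuous_map X euclidean (\<lambda>x. fst (f x))"
  by (simp add: continuous_map_atin tendsto_fst)

lemma continuous_map_euclidean_snd:
  "continuous_map X euclidean f \<Longrightarrow> continuous_map X euclidean (\<lambda>x. snd (f x))"
  by (simp add: continuous_map_atin tendsto_snd)

lemma continuous_map_euclidean_Pair:
  "continuous_map X euclidean f \<Longrightarrow> continuous_map X euclidean g \<Longrightarrow>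
   continuous_map X euclidean (\<lambda>x. (f x, g x))"
  by (simp add: continuous_map_atin tendsto_Pair)

lemma continuous_map_vec_nth:
  "continuous_map X euclidean f \<Longrightarrow> continuous_map X euclidean (\<lambda>x. f x $ i)"
  by (simp add: continuous_map_atin tendsto_vec_nth)

lemma continuous_map_inner:
  fixes f g :: "'a \<Rightarrow> 'b::real_inner"
  shows "continuous_map X euclidean f \<Longrightarrow> continuous_map X euclidean g \<Longrightarrow>
   continuous_map X euclidean (\<lambda>x. f x \<bullet> g x)"
  by (simp add: continuous_map_atin tendsto_inner)

lemma continuous_map_scaleR:
  fixes g :: "'a \<Rightarrow> 'b::real_normed_vector"
  shows "continuous_map X euclidean f \<Longrightarrow> continuous_map X euclidean g \<Longrightarrow>
   continuous_map X euclidean (\<lambda>x. f x *\<^sub>R g x)"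
  by (simp add: continuous_map_atin tendsto_scaleR)

lemma continuous_map_cross3:
  assumes "continuous_map X euclidean f" "continuous_map X euclidean g"
  shows "continuous_map X euclidean (\<lambda>x. cross3 (f x) (g x))"
proof -
  have "continuous_on UNIV (\<lambda>z :: vec3 \<times> vec3. cross3 (fst z) (snd z))"
    by (intro continuous_on_cross continuous_on_fst continuous_on_snd continuous_on_id)
  then show ?thesis
    using continuous_map_compose[OF continuous_map_euclidean_Pair[OF assms],
        of euclidean "\<lambda>z. cross3 (fst z) (snd z)"]
    by (simp add: o_def)
qed

lemma vector2_eq_axis: "(vector [a, b] :: real^2) = a *\<^sub>R axis 1 1 + b *\<^sub>R axis 2 1"
  by (simp add: vec_eq_iff forall_2 axis_def)

lemma vector3_eq_axis:
  "(vector [a, b, c] :: real^3) = a *\<^sub>R axis 1 1 + b *\<^sub>R axis 2 1 + c *\<^sub>R axis 3 1"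
  by (simp add: vec_eq_iff forall_3 axis_def)

lemma continuous_map_vector2:
  "continuous_map X euclidean f \<Longrightarrow> continuous_map X euclidean g \<Longrightarrow>
   continuous_map X euclidean (\<lambda>x. vector [f x, g x] :: real^2)"
  unfolding vector2_eq_axis by (intro continuous_map_add continuous_map_scaleR continuous_map_canonical_const)

lemma continuous_map_vector3:
  "continuous_map X euclidean f \<Longrightarrow> continuous_map X euclidean g \<Longrightarrow> continuous_map X euclidean h \<Longrightarrow>
   continuous_map X euclidean (\<lambda>x. vector [f x, g x, h x] :: real^3)"
  unfolding vector3_eq_axis by (intro continuous_map_add continuous_map_scaleR continuous_map_canonical_const)

lemma is_frame_inner:
  assumes "is_frame F"
  shows "fst F \<bullet> fst F = 1" "snd F \<bullet> snd F = 1" "fst F \<bullet> snd F = 0" "snd F \<bullet> fst F = 0"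
  using assms unfolding is_frame_def by (auto simp: norm_eq_1 inner_commute)

lemma inner_vector2: "(v :: real^2) \<bullet> w = v$1 * w$1 + v$2 * w$2"
  by (simp add: inner_vec_def sum_2)

lemma emb_inner: "is_frame F \<Longrightarrow> emb F v \<bullet> emb F w = v \<bullet> w"
  using is_frame_inner[of F]
  by (simp add: emb_def inner_vector2 inner_add_left inner_add_right algebra_simps)

lemma norm_emb: "is_frame F \<Longrightarrow> norm (emb F v) = norm v"
  by (simp add: norm_eq_sqrt_inner emb_inner)

lemma emb_scaleR: "emb F (c *\<^sub>R v) = c *\<^sub>R emb F v"
  by (simp add: emb_def algebra_simps)

lemma emb_diff: "emb F (v - w) = emb F v - emb F w"
  by (simp add: emb_def algebra_simps)

lemma emb_zero [simp]: "emb F 0 = 0"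
  by (simp add: emb_def)

lemma emb_eq_iff: "is_frame F \<Longrightarrow> emb F v = emb F w \<longleftrightarrow> v = w"
  by (metis emb_diff norm_emb eq_iff_diff_eq_0 norm_eq_zero)

lemma emb_eq_0_iff: "is_frame F \<Longrightarrow> emb F v = 0 \<longleftrightarrow> v = 0"
  using emb_eq_iff[of F v 0] by simp

definition frame_normal :: "frame \<Rightarrow> vec3" where
  "frame_normal F = cross3 (fst F) (snd F)"

lemma is_frame_normal:
  assumes "is_frame F"
  shows "frame_normal F \<bullet> frame_normal F = 1"
    "frame_normal F \<bullet> fst F = 0" "frame_normal F \<bullet> snd F = 0"
    "fst F \<bullet> frame_normal F = 0" "snd F \<bullet> frame_normal F = 0"
proof -
  have "(norm (frame_normal F))\<^sup>2 = 1"
    using norm_cross_dot[of "fst F" "snd F"] assms unfolding is_frame_def frame_normal_def by simp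
  then show "frame_normal F \<bullet> frame_normal F = 1"
    by (simp add: power2_norm_eq_inner)
  show "frame_normal F \<bullet> fst F = 0" "frame_normal F \<bullet> snd F = 0"
    "fst F \<bullet> frame_normal F = 0" "snd F \<bullet> frame_normal F = 0"
    unfolding frame_normal_def using dot_cross_self by (auto simp: inner_commute)
qed

lemma orthogonal_both_imp_multiple_cross3:
  fixes a b x :: vec3
  assumes "cross3 a b \<noteq> 0" "x \<bullet> a = 0" "x \<bullet> b = 0"
  shows "\<exists>c. x = c *\<^sub>R cross3 a b"
proof -
  have "cross3 x (cross3 a b) = (x \<bullet> b) *\<^sub>R a - (x \<bullet> a) *\<^sub>R b"
    unfolding vec_eq_iff forall_3 by (simp add: cross3_def inner_vec_def sum_3 algebra_simps)
  then have "collinear {0, cross3 a b, x}"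
    using assms by (simp add: cross_eq_0 insert_commute)
  then show ?thesis
    using assms(1) collinear_lemma by (metis scale_zero_left)
qed

lemma frame_basis_expansion:
  assumes F: "is_frame F"
  shows "x = (x \<bullet> fst F) *\<^sub>R fst F + (x \<bullet> snd F) *\<^sub>R snd F + (x \<bullet> frame_normal F) *\<^sub>R frame_normal F"
proof -
  define y where "y = x - (x \<bullet> fst F) *\<^sub>R fst F - (x \<bullet> snd F) *\<^sub>R snd F - (x \<bullet> frame_normal F) *\<^sub>R frame_normal F"
  note ff = is_frame_inner[OF F] is_frame_normal[OF F]
  have "y \<bullet> fst F = 0" "y \<bullet> snd F = 0" "y \<bullet> frame_normal F = 0"
    using ff by (simp_all add: y_def inner_diff_left)
  moreover have "cross3 (fst F) (snd F) \<noteq> 0"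
    using ff by (metis frame_normal_def inner_zero_left zero_neq_one)
  ultimately obtain c where "y = c *\<^sub>R frame_normal F" "y \<bullet> frame_normal F = 0"
    using orthogonal_both_imp_multiple_cross3 unfolding frame_normal_def by blast
  then have "y = 0"
    using ff by simp
  then show ?thesis
    by (simp add: y_def algebra_simps)
qed

lemma inner_self_frame_coordinates:
  assumes "is_frame F"
  shows "x \<bullet> x = (x \<bullet> fst F)\<^sup>2 + (x \<bullet> snd F)\<^sup>2 + (x \<bullet> frame_normal F)\<^sup>2"
proof -
  have "x \<bullet> x = x \<bullet> ((x \<bullet> fst F) *\<^sub>R fst F + (x \<bullet> snd F) *\<^sub>R snd F +
                      (x \<bullet> frame_normal F) *\<^sub>R frame_normal F)"
    using frame_basis_expansion[OF assms] by simp
  then show ?thesis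
    by (simp add: inner_add_right power2_eq_square)
qed

lemma emb_frame_coordinates:
  assumes "is_frame F" "x \<bullet> frame_normal F = 0"
  shows "x = emb F (vector [x \<bullet> fst F, x \<bullet> snd F])"
  using frame_basis_expansion[OF assms(1), of x] assms(2) by (simp add: emb_def)

lemma emb_orthogonal_normal: "is_frame F \<Longrightarrow> emb F v \<bullet> frame_normal F = 0"
  using is_frame_normal[of F] by (simp add: emb_def inner_add_left)

lemma plane_of_eq: "is_frame F \<Longrightarrow> plane_of F = {x. x \<bullet> frame_normal F = 0}"
  unfolding plane_of_def using emb_frame_coordinates emb_orthogonal_normal by blast

lemma orthogonal_matrix_inner:
  "orthogonal_matrix A \<Longrightarrow> (A *v x) \<bullet> (A *v y) = x \<bullet> (y :: real^'n)"
  using orthogonal_transformation_matrix[of "\<lambda>x. A *v x"]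
  by (simp add: matrix_of_matrix_vector_mul orthogonal_transformation_def)

lemma orthogonal_matrix_transpose_cancel:
  "orthogonal_matrix A \<Longrightarrow> transpose A *v (A *v x) = (x :: real^'n)"
  by (simp add: matrix_vector_mul_assoc orthogonal_matrix)

lemma inj_orthogonal_matrix: "orthogonal_matrix A \<Longrightarrow> inj (\<lambda>x :: real^'n. A *v x)"
  by (rule injI) (metis orthogonal_matrix_transpose_cancel)

lemma emb_act: "emb (act A F) v = A *v emb F v"
  by (simp add: act_def emb_def algebra_simps)

lemma is_frame_act: "orthogonal_matrix A \<Longrightarrow> is_frame F \<Longrightarrow> is_frame (act A F)"
  by (simp add: is_frame_def act_def norm_eq_sqrt_inner orthogonal_matrix_inner)

lemma plane_of_act: "plane_of (act A F) = (\<lambda>x. A *v x) ` plane_of F"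
  unfolding plane_of_def by (auto simp: emb_act)

lemma act_act: "act B (act A F) = act (B ** A) F"
  by (simp add: act_def matrix_vector_mul_assoc)

lemma act_id: "act (mat 1) F = F"
  by (simp add: act_def)

lemma act_transpose_act: "orthogonal_matrix A \<Longrightarrow> act (transpose A) (act A F) = F"
  unfolding act_def fst_conv snd_conv by (simp only: orthogonal_matrix_transpose_cancel prod.collapse)

definition common_dir :: "frame \<Rightarrow> frame \<Rightarrow> vec3" where
  "common_dir F1 F2 = cross3 (frame_normal F1) (frame_normal F2)"

lemma common_dir_orthogonal:
  "common_dir F1 F2 \<bullet> frame_normal F1 = 0" "common_dir F1 F2 \<bullet> frame_normal F2 = 0"
  unfolding common_dir_def using dot_cross_self by (auto simp: inner_commute)

lemma common_dir_nonzero: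
  assumes F1: "is_frame F1" and F2: "is_frame F2" and ne: "plane_of F1 \<noteq> plane_of F2"
  shows "common_dir F1 F2 \<noteq> 0"
proof
  assume "common_dir F1 F2 = 0"
  then have "collinear {0, frame_normal F1, frame_normal F2}"
    by (simp add: common_dir_def cross_eq_0)
  moreover have "frame_normal F1 \<noteq> 0"
    using is_frame_normal[OF F1] by auto
  ultimately obtain c where c: "frame_normal F2 = c *\<^sub>R frame_normal F1"
    using collinear_lemma by (metis scale_zero_left)
  moreover have "c \<noteq> 0"
    using c is_frame_normal[OF F2] by auto
  ultimately have "plane_of F2 = plane_of F1"
    unfolding plane_of_eq[OF F1] plane_of_eq[OF F2] by auto
  with ne show False by simp
qed

lemma plane_of_Int_plane_of:
  assumes "is_frame F1" "is_frame F2" "plane_of F1 \<noteq> plane_of F2"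
  shows "plane_of F1 \<inter> plane_of F2 = range (\<lambda>c. c *\<^sub>R common_dir F1 F2)"
proof
  show "plane_of F1 \<inter> plane_of F2 \<subseteq> range (\<lambda>c. c *\<^sub>R common_dir F1 F2)"
    using orthogonal_both_imp_multiple_cross3[of "frame_normal F1" "frame_normal F2"]
      common_dir_nonzero[OF assms]
    unfolding plane_of_eq[OF assms(1)] plane_of_eq[OF assms(2)] common_dir_def by blast
  show "range (\<lambda>c. c *\<^sub>R common_dir F1 F2) \<subseteq> plane_of F1 \<inter> plane_of F2"
    unfolding plane_of_eq[OF assms(1)] plane_of_eq[OF assms(2)] by (auto simp: common_dir_orthogonal)
qed

lemma range_scaleR_eq_range_scaleR:
  fixes u x :: "'a::real_vector"
  assumes "x \<in> range (\<lambda>c. c *\<^sub>R u)" "x \<noteq> 0"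
  shows "range (\<lambda>c. c *\<^sub>R u) = range (\<lambda>c. c *\<^sub>R x)"
proof -
  obtain c0 where c0: "x = c0 *\<^sub>R u" "c0 \<noteq> 0"
    using assms by auto
  have "c *\<^sub>R u = (c / c0) *\<^sub>R x" for c
    using c0 by simp
  then have "range (\<lambda>c. c *\<^sub>R u) \<subseteq> range (\<lambda>c. c *\<^sub>R x)"
    by blast
  moreover have "range (\<lambda>c. c *\<^sub>R x) \<subseteq> range (\<lambda>c. c *\<^sub>R u)"
    using c0(1) by (auto intro: range_eqI[where x = "_ * c0"])
  ultimately show ?thesis
    by (rule subset_antisym)
qed

definition common_line :: "frame \<Rightarrow> frame \<Rightarrow> plane_vec \<times> plane_vec" where
  "common_line F1 F2 =
     (vector [fst F1 \<bullet> common_dir F1 F2, snd F1 \<bullet> common_dir F1 F2],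
      vector [fst F2 \<bullet> common_dir F1 F2, snd F2 \<bullet> common_dir F1 F2])"

lemma emb_common_line:
  assumes "is_frame F1" "is_frame F2"
  shows "emb F1 (fst (common_line F1 F2)) = common_dir F1 F2"
    "emb F2 (snd (common_line F1 F2)) = common_dir F1 F2"
  using emb_frame_coordinates[OF assms(1) common_dir_orthogonal(1)]
    emb_frame_coordinates[OF assms(2) common_dir_orthogonal(2)]
  by (simp_all add: common_line_def inner_commute)

lemma common_line_nonzero:
  assumes "is_frame F1" "is_frame F2" "plane_of F1 \<noteq> plane_of F2"
  shows "common_line F1 F2 \<noteq> 0"
proof
  assume "common_line F1 F2 = 0"
  then show False
    using emb_common_line(1)[OF assms(1,2)] common_dir_nonzero[OF assms] by simp
qed

lemma realizing_pair_multiple_common_line: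
  assumes F1: "is_frame F1" and F2: "is_frame F2" and ne: "plane_of F1 \<noteq> plane_of F2"
    and e: "emb F1 v = emb F2 w"
  shows "\<exists>c. (v, w) = c *\<^sub>R common_line F1 F2"
proof -
  have "emb F1 v \<in> plane_of F1 \<inter> plane_of F2"
    unfolding plane_of_def by (metis IntI rangeI e)
  then obtain c where c: "emb F1 v = c *\<^sub>R common_dir F1 F2"
    using plane_of_Int_plane_of[OF F1 F2 ne] by auto
  then have "emb F1 v = emb F1 (c *\<^sub>R fst (common_line F1 F2))"
    "emb F2 w = emb F2 (c *\<^sub>R snd (common_line F1 F2))"
    using e by (simp_all add: emb_scaleR emb_common_line[OF F1 F2])
  then have "v = c *\<^sub>R fst (common_line F1 F2)" "w = c *\<^sub>R snd (common_line F1 F2)"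
    using emb_eq_iff[OF F1] emb_eq_iff[OF F2] by blast+
  then show ?thesis
    by (auto simp: prod_eq_iff)
qed

section \<open>Reconstruction of a generic tuple from its common lines\<close>

lemma genericD:
  assumes "F \<in> generic N"
  shows "\<And>i. i < N \<Longrightarrow> is_frame (F i)"
    "\<And>i j. i < N \<Longrightarrow> j < N \<Longrightarrow> i \<noteq> j \<Longrightarrow> plane_of (F i) \<noteq> plane_of (F j)"
    "\<And>p q. p \<in> pairs N \<Longrightarrow> q \<in> pairs N \<Longrightarrow> p \<noteq> q \<Longrightarrow>
       plane_of (F (fst p)) \<inter> plane_of (F (snd p)) \<noteq> plane_of (F (fst q)) \<inter> plane_of (F (snd q))"
  using assms unfolding generic_def by auto

lemma generic_pairD:
  assumes "F \<in> generic N" "(i, j) \<in> pairs N"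
  shows "is_frame (F i)" "is_frame (F j)" "plane_of (F i) \<noteq> plane_of (F j)"
  using genericD[OF assms(1)] assms(2) by (auto simp: pairs_def)

definition det2 :: "plane_vec \<Rightarrow> plane_vec \<Rightarrow> real" where
  "det2 p q = p$1 * q$2 - p$2 * q$1"

lemma det2_eq_0_imp_multiple:
  assumes "det2 s t = 0" "s \<noteq> 0"
  shows "\<exists>c. t = c *\<^sub>R s"
proof (cases "s$1 = 0")
  case True
  then have "s$2 \<noteq> 0"
    using assms(2) by (metis exhaust_2 vec_eq_iff zero_index)
  moreover have "t$1 = 0"
    using assms(1) True \<open>s$2 \<noteq> 0\<close> by (simp add: det2_def)
  ultimately show ?thesis
    using True by (intro exI[of _ "t$2 / s$2"]) (simp add: vec_eq_iff forall_2)
next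
  case False
  then have "t$2 = t$1 / s$1 * s$2"
    using assms(1) by (simp add: det2_def field_simps)
  then show ?thesis
    using False by (intro exI[of _ "t$1 / s$1"]) (simp add: vec_eq_iff forall_2)
qed

lemma cramer2:
  fixes x y :: real
  assumes "det2 p q \<noteq> 0" "p$1 * x + p$2 * y = g" "q$1 * x + q$2 * y = h"
  shows "x = (q$2 * g - p$2 * h) / det2 p q" "y = (p$1 * h - q$1 * g) / det2 p q"
  using assms(1) unfolding assms(2,3)[symmetric] det2_def by (simp_all add: field_simps)

lemma det2_nonzero_distinct_common_lines:
  assumes gen: "F \<in> generic N" and k: "k < N"
    and p: "p \<in> pairs N" and q: "q \<in> pairs N" and pq: "p \<noteq> q"
    and s: "emb (F k) s \<in> plane_of (F (fst p)) \<inter> plane_of (F (snd p))" "s \<noteq> 0"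
    and t: "emb (F k) t \<in> plane_of (F (fst q)) \<inter> plane_of (F (snd q))" "t \<noteq> 0"
  shows "det2 s t \<noteq> 0"
proof
  assume "det2 s t = 0"
  then obtain c where c: "t = c *\<^sub>R s"
    using det2_eq_0_imp_multiple s(2) by blast
  have Fk: "is_frame (F k)"
    using genericD(1)[OF gen k] .
  have line: "plane_of (F (fst r)) \<inter> plane_of (F (snd r)) = range (\<lambda>c. c *\<^sub>R common_dir (F (fst r)) (F (snd r)))"
    if "r \<in> pairs N" for r
    using plane_of_Int_plane_of generic_pairD[OF gen] that by (metis prod.collapse)
  have et: "emb (F k) t \<noteq> 0"
    using t(2) emb_eq_0_iff[OF Fk] by simp
  have "emb (F k) t \<in> plane_of (F (fst p)) \<inter> plane_of (F (snd p))"
    using s(1) unfolding line[OF p] c emb_scaleR by auto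
  then have "plane_of (F (fst p)) \<inter> plane_of (F (snd p)) = range (\<lambda>c. c *\<^sub>R emb (F k) t)"
    using range_scaleR_eq_range_scaleR[OF _ et] line[OF p] by simp
  moreover have "plane_of (F (fst q)) \<inter> plane_of (F (snd q)) = range (\<lambda>c. c *\<^sub>R emb (F k) t)"
    using range_scaleR_eq_range_scaleR[OF _ et] line[OF q] t(1) by simp
  ultimately show False
    using genericD(3)[OF gen p q pq] by simp
qed

definition std_frame :: frame where
  "std_frame = (vector [1, 0, 0], vector [0, 1, 0])"

lemma emb_std_frame: "emb std_frame v = vector [v$1, v$2, 0]"
  unfolding emb_def std_frame_def vec_eq_iff forall_3 by simp

definition frame_from_images :: "plane_vec \<Rightarrow> plane_vec \<Rightarrow> vec3 \<Rightarrow> vec3 \<Rightarrow> frame" where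
  "frame_from_images p q P Q =
     ((1 / det2 p q) *\<^sub>R (q$2 *\<^sub>R P - p$2 *\<^sub>R Q), (1 / det2 p q) *\<^sub>R (p$1 *\<^sub>R Q - q$1 *\<^sub>R P))"

lemma frame_from_images_eq:
  assumes "det2 p q \<noteq> 0" "emb F p = P" "emb F q = Q"
  shows "frame_from_images p q P Q = F"
proof -
  obtain a b where F: "F = (a, b)"
    by fastforce
  have "q$2 *\<^sub>R P - p$2 *\<^sub>R Q = det2 p q *\<^sub>R a" "p$1 *\<^sub>R Q - q$1 *\<^sub>R P = det2 p q *\<^sub>R b"
    using assms(2,3) unfolding F det2_def by (auto simp: emb_def algebra_simps)
  then show ?thesis
    unfolding frame_from_images_def F using assms(1) by simp
qed

type_synonym reps = "nat \<times> nat \<Rightarrow> plane_vec \<times> plane_vec"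

definition realizing_reps :: "nat \<Rightarrow> (nat \<Rightarrow> frame) \<Rightarrow> reps \<Rightarrow> bool" where
  "realizing_reps N F R \<longleftrightarrow>
     (\<forall>p\<in>pairs N. R p \<noteq> 0 \<and> emb (F (fst p)) (fst (R p)) = emb (F (snd p)) (snd (R p)))"

lemma realizing_repsD:
  assumes gen: "F \<in> generic N" and R: "realizing_reps N F R" and p: "(i, j) \<in> pairs N"
  shows "emb (F i) (fst (R (i, j))) = emb (F j) (snd (R (i, j)))"
    "fst (R (i, j)) \<noteq> 0" "snd (R (i, j)) \<noteq> 0"
    "emb (F i) (fst (R (i, j))) \<in> plane_of (F i) \<inter> plane_of (F j)"
    "emb (F j) (snd (R (i, j))) \<in> plane_of (F i) \<inter> plane_of (F j)"
proof -
  note frames = generic_pairD(1,2)[OF gen p]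
  have nz: "R (i, j) \<noteq> 0" and e: "emb (F i) (fst (R (i, j))) = emb (F j) (snd (R (i, j)))"
    using R p unfolding realizing_reps_def by auto
  show "emb (F i) (fst (R (i, j))) = emb (F j) (snd (R (i, j)))"
    by (fact e)
  have "fst (R (i, j)) = 0 \<longleftrightarrow> snd (R (i, j)) = 0"
    using e emb_eq_0_iff[OF frames(1)] emb_eq_0_iff[OF frames(2)] by metis
  then show "fst (R (i, j)) \<noteq> 0" "snd (R (i, j)) \<noteq> 0"
    using nz by (metis prod_eq_iff zero_prod_def fst_conv snd_conv)+
  show "emb (F i) (fst (R (i, j))) \<in> plane_of (F i) \<inter> plane_of (F j)"
    "emb (F j) (snd (R (i, j))) \<in> plane_of (F i) \<inter> plane_of (F j)"
    unfolding plane_of_def using e by (metis IntI rangeI)+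
qed

lemma realizing_reps_det2_nonzero:
  assumes gen: "F \<in> generic N" and N: "N \<ge> 3" and R: "realizing_reps N F R"
  shows "det2 (fst (R (0, 1))) (fst (R (0, 2))) \<noteq> 0"
    "det2 (snd (R (0, 1))) (fst (R (1, 2))) \<noteq> 0"
    "\<And>k. 2 \<le> k \<Longrightarrow> k < N \<Longrightarrow> det2 (snd (R (0, k))) (snd (R (1, k))) \<noteq> 0"
proof -
  have p01: "(0, 1) \<in> pairs N" and p02: "(0, 2) \<in> pairs N" and p12: "(1, 2) \<in> pairs N"
    using N by (auto simp: pairs_def)
  show "det2 (fst (R (0, 1))) (fst (R (0, 2))) \<noteq> 0"
    using det2_nonzero_distinct_common_lines[OF gen _ p01 p02, of 0]
      realizing_repsD[OF gen R p01] realizing_repsD[OF gen R p02] N by simp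
  show "det2 (snd (R (0, 1))) (fst (R (1, 2))) \<noteq> 0"
    using det2_nonzero_distinct_common_lines[OF gen _ p01 p12, of 1]
      realizing_repsD[OF gen R p01] realizing_repsD[OF gen R p12] N by simp
  fix k assume k: "2 \<le> k" "k < N"
  then have p0k: "(0, k) \<in> pairs N" and p1k: "(1, k) \<in> pairs N"
    by (auto simp: pairs_def)
  show "det2 (snd (R (0, k))) (snd (R (1, k))) \<noteq> 0"
    using det2_nonzero_distinct_common_lines[OF gen _ p0k p1k, of k]
      realizing_repsD[OF gen R p0k] realizing_repsD[OF gen R p1k] k by simp
qed

text \<open>Reconstruction from representatives R (i, j) = (v_ij, v_ji), normalized so that frame 0 is
the standard frame.  Z = iota_1(v_12) is determined by Z . X = v_10 . v_12 and Z . Y = v_20 . v_21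
for X = iota_0(v_01), Y = iota_0(v_02), and by its length, up to the sign of its third coordinate,
which the reflections in O(3) absorb.\<close>

definition rec_coords :: "reps \<Rightarrow> real \<times> real" where
  "rec_coords R =
     (let p = fst (R (0, 1)); q = fst (R (0, 2));
          g = snd (R (0, 1)) \<bullet> fst (R (1, 2)); h = snd (R (0, 2)) \<bullet> snd (R (1, 2))
      in ((q$2 * g - p$2 * h) / det2 p q, (p$1 * h - q$1 * g) / det2 p q))"

definition rec_point :: "reps \<Rightarrow> vec3" where
  "rec_point R =
     vector [fst (rec_coords R), snd (rec_coords R),
             sqrt (fst (R (1, 2)) \<bullet> fst (R (1, 2)) - (fst (rec_coords R))\<^sup>2 - (snd (rec_coords R))\<^sup>2)]"

definition rec_frame1 :: "reps \<Rightarrow> frame" where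
  "rec_frame1 R = frame_from_images (snd (R (0, 1))) (fst (R (1, 2))) (emb std_frame (fst (R (0, 1)))) (rec_point R)"

definition rec_frame :: "reps \<Rightarrow> nat \<Rightarrow> frame" where
  "rec_frame R k =
     (if k = 0 then std_frame
      else if k = 1 then rec_frame1 R
      else frame_from_images (snd (R (0, k))) (snd (R (1, k)))
             (emb std_frame (fst (R (0, k)))) (emb (rec_frame1 R) (fst (R (1, k)))))"

definition align_matrix :: "frame \<Rightarrow> real \<Rightarrow> real^3^3" where
  "align_matrix F \<sigma> = vector [fst F, snd F, \<sigma> *\<^sub>R frame_normal F]"

lemma align_matrix_mult:
  "align_matrix F \<sigma> *v x = vector [fst F \<bullet> x, snd F \<bullet> x, \<sigma> * (frame_normal F \<bullet> x)]"
  unfolding vec_eq_iff forall_3 by (simp add: matrix_vector_mul_component align_matrix_def)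

lemma orthogonal_matrix_align_matrix:
  assumes F: "is_frame F" and \<sigma>: "\<sigma> * \<sigma> = 1"
  shows "orthogonal_matrix (align_matrix F \<sigma>)"
proof -
  have rows: "row 1 (align_matrix F \<sigma>) = fst F" "row 2 (align_matrix F \<sigma>) = snd F"
    "row 3 (align_matrix F \<sigma>) = \<sigma> *\<^sub>R frame_normal F"
    by (simp_all add: row_def align_matrix_def vec_lambda_eta vec_eq_iff)
  note ff = is_frame_inner[OF F] is_frame_normal[OF F]
  show ?thesis
    unfolding orthogonal_matrix_orthonormal_rows
  proof (intro conjI allI impI)
    fix i :: 3
    show "norm (row i (align_matrix F \<sigma>)) = 1"
      using exhaust_3[of i] rows ff \<sigma> by (auto simp: norm_eq_1)
  next
    fix i j :: 3
    assume "i \<noteq> j"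
    then show "orthogonal (row i (align_matrix F \<sigma>)) (row j (align_matrix F \<sigma>))"
      using exhaust_3[of i] exhaust_3[of j] rows ff by (auto simp: orthogonal_def)
  qed
qed

lemma align_matrix_emb:
  assumes "is_frame F"
  shows "align_matrix F \<sigma> *v emb F v = emb std_frame v"
  using is_frame_inner[OF assms] is_frame_normal[OF assms]
  unfolding align_matrix_mult emb_std_frame by (simp add: emb_def inner_add_right)

lemma act_align_matrix:
  assumes "is_frame F"
  shows "act (align_matrix F \<sigma>) F = std_frame"
proof -
  have "fst F = emb F (vector [1, 0])" "snd F = emb F (vector [0, 1])"
    by (simp_all add: emb_def)
  then show ?thesis
    unfolding act_def using align_matrix_emb[OF assms]
    by (metis emb_std_frame std_frame_def vector_2 prod.collapse fst_conv snd_conv)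
qed

lemma align_matrix_rec_point:
  assumes gen: "F \<in> generic N" and N: "N \<ge> 3" and R: "realizing_reps N F R"
  defines "Z \<equiv> emb (F 1) (fst (R (1, 2)))"
  defines "\<sigma> \<equiv> if frame_normal (F 0) \<bullet> Z \<ge> 0 then 1 else -1 :: real"
  shows "align_matrix (F 0) \<sigma> *v Z = rec_point R"
proof -
  have p01: "(0, 1) \<in> pairs N" and p02: "(0, 2) \<in> pairs N" and p12: "(1, 2) \<in> pairs N"
    using N by (auto simp: pairs_def)
  have F0: "is_frame (F 0)" and F1: "is_frame (F 1)" and F2: "is_frame (F 2)"
    using genericD(1)[OF gen] N by auto
  let ?a = "fst (F 0)" and ?b = "snd (F 0)"
  let ?p = "fst (R (0, 1))" and ?q = "fst (R (0, 2))"
  have inner_Z: "emb (F 0) v \<bullet> Z = v$1 * (?a \<bullet> Z) + v$2 * (?b \<bullet> Z)" for v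
    by (simp add: emb_def inner_add_left)
  have "emb (F 0) ?p \<bullet> Z = snd (R (0, 1)) \<bullet> fst (R (1, 2))"
    using realizing_repsD(1)[OF gen R p01] emb_inner[OF F1] by (simp add: Z_def)
  moreover have "emb (F 0) ?q \<bullet> Z = snd (R (0, 2)) \<bullet> snd (R (1, 2))"
    using realizing_repsD(1)[OF gen R p02] realizing_repsD(1)[OF gen R p12] emb_inner[OF F2]
    by (simp add: Z_def)
  ultimately have coords: "(?a \<bullet> Z, ?b \<bullet> Z) = rec_coords R"
    using cramer2[OF realizing_reps_det2_nonzero(1)[OF gen N R], of "?a \<bullet> Z" "?b \<bullet> Z"] inner_Z
    by (simp add: rec_coords_def Let_def)
  have "fst (R (1, 2)) \<bullet> fst (R (1, 2)) = (?a \<bullet> Z)\<^sup>2 + (?b \<bullet> Z)\<^sup>2 + (frame_normal (F 0) \<bullet> Z)\<^sup>2"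
    using inner_self_frame_coordinates[OF F0, of Z] emb_inner[OF F1] by (simp add: Z_def inner_commute)
  then have "sqrt (fst (R (1, 2)) \<bullet> fst (R (1, 2)) - (?a \<bullet> Z)\<^sup>2 - (?b \<bullet> Z)\<^sup>2) = \<sigma> * (frame_normal (F 0) \<bullet> Z)"
    by (simp add: \<sigma>_def)
  then show ?thesis
    unfolding align_matrix_mult rec_point_def using coords by (metis fst_conv snd_conv)
qed

theorem rec_frame_congruent:
  assumes gen: "F \<in> generic N" and N: "N \<ge> 3" and R: "realizing_reps N F R"
  shows "\<exists>A. orthogonal_matrix A \<and> (\<forall>k<N. rec_frame R k = act A (F k))"
proof -
  have p01: "(0, 1) \<in> pairs N" and p12: "(1, 2) \<in> pairs N"
    using N by (auto simp: pairs_def)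
  have F0: "is_frame (F 0)"
    using genericD(1)[OF gen] N by auto
  define \<sigma> :: real where "\<sigma> = (if frame_normal (F 0) \<bullet> emb (F 1) (fst (R (1, 2))) \<ge> 0 then 1 else -1)"
  define A where "A = align_matrix (F 0) \<sigma>"
  have A: "orthogonal_matrix A"
    unfolding A_def by (rule orthogonal_matrix_align_matrix[OF F0]) (simp add: \<sigma>_def)
  have A0: "act A (F 0) = std_frame"
    unfolding A_def by (rule act_align_matrix[OF F0])
  have A_emb0: "emb (act A (F j)) (snd (R (0, j))) = emb std_frame (fst (R (0, j)))"
    if "(0, j) \<in> pairs N" for j
    using realizing_repsD(1)[OF gen R that, symmetric] align_matrix_emb[OF F0] by (simp add: emb_act A_def)
  have A1: "act A (F 1) = rec_frame R 1"
  proof -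
    have "emb (act A (F 1)) (fst (R (1, 2))) = rec_point R"
      unfolding emb_act A_def \<sigma>_def by (rule align_matrix_rec_point[OF gen N R])
    from frame_from_images_eq[OF realizing_reps_det2_nonzero(2)[OF gen N R] A_emb0[OF p01] this]
    show ?thesis
      by (simp add: rec_frame_def rec_frame1_def)
  qed
  have Ak: "act A (F k) = rec_frame R k" if k: "2 \<le> k" "k < N" for k
  proof -
    have p0k: "(0, k) \<in> pairs N" and p1k: "(1, k) \<in> pairs N"
      using k by (auto simp: pairs_def)
    have "emb (act A (F k)) (snd (R (1, k))) = emb (rec_frame1 R) (fst (R (1, k)))"
      using A1 realizing_repsD(1)[OF gen R p1k] emb_act[of A "F 1"] by (simp add: emb_act rec_frame_def)
    from frame_from_images_eq[OF realizing_reps_det2_nonzero(3)[OF gen N R k] A_emb0[OF p0k] this]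
    show ?thesis
      using k by (simp add: rec_frame_def)
  qed
  have "rec_frame R k = act A (F k)" if "k < N" for k
    using that A0 A1 Ak[of k] by (cases "k = 0"; cases "k = 1") (auto simp: rec_frame_def)
  with A show ?thesis
    by blast
qed

definition proj_class :: "plane_vec \<times> plane_vec \<Rightarrow> (plane_vec \<times> plane_vec) set" where
  "proj_class x = proj_rel `` {x}"

lemma mem_proj_class: "x \<noteq> 0 \<Longrightarrow> y \<in> proj_class x \<longleftrightarrow> (\<exists>c. c \<noteq> 0 \<and> y = c *\<^sub>R x)"
  by (auto simp: proj_class_def proj_rel_def)

lemma proj_class_self: "x \<noteq> 0 \<Longrightarrow> x \<in> proj_class x"
  by (auto simp: mem_proj_class intro: exI[of _ 1])

lemma proj_class_scaleR: "x \<noteq> 0 \<Longrightarrow> c \<noteq> 0 \<Longrightarrow> proj_class (c *\<^sub>R x) = proj_class x"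
proof (rule set_eqI)
  fix y
  assume x: "x \<noteq> 0" and c: "c \<noteq> 0"
  have "(\<exists>d. d \<noteq> 0 \<and> y = d *\<^sub>R c *\<^sub>R x) \<longleftrightarrow> (\<exists>d. d \<noteq> 0 \<and> y = d *\<^sub>R x)"
  proof
    assume "\<exists>d. d \<noteq> 0 \<and> y = d *\<^sub>R c *\<^sub>R x"
    then show "\<exists>d. d \<noteq> 0 \<and> y = d *\<^sub>R x"
      using c by (metis scaleR_scaleR mult_eq_0_iff)
  next
    assume "\<exists>d. d \<noteq> 0 \<and> y = d *\<^sub>R x"
    then obtain d where "d \<noteq> 0" "y = d *\<^sub>R x"
      by blast
    then show "\<exists>d. d \<noteq> 0 \<and> y = d *\<^sub>R c *\<^sub>R x"
      using c by (intro exI[of _ "d / c"]) simp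
  qed
  then show "y \<in> proj_class (c *\<^sub>R x) \<longleftrightarrow> y \<in> proj_class x"
    using x c by (simp add: mem_proj_class)
qed

lemma topspace_RP3: "topspace RP3 = proj_class ` (- {0})"
  unfolding RP3_def topspace_quotient_topology by (simp add: proj_class_def)

lemma topspace_RP3E:
  assumes "c \<in> topspace RP3"
  obtains x where "x \<noteq> 0" "c = proj_class x"
  using assms unfolding topspace_RP3 by auto

lemma some_in_topspace_RP3: "c \<in> topspace RP3 \<Longrightarrow> (SOME y. y \<in> c) \<in> c"
  by (metis topspace_RP3E proj_class_self someI)

lemma topspace_CL_top: "topspace (CL_top N) = PiE (pairs N) (\<lambda>_. topspace RP3)"
  by (simp add: CL_top_def)

definition cl_data :: "nat \<Rightarrow> (nat \<Rightarrow> frame) \<Rightarrow> nat \<times> nat \<Rightarrow> (plane_vec \<times> plane_vec) set" where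
  "cl_data N F = restrict (\<lambda>p. proj_class (common_line (F (fst p)) (F (snd p)))) (pairs N)"

lemma cl_data_in_topspace: "F \<in> generic N \<Longrightarrow> cl_data N F \<in> topspace (CL_top N)"
  using common_line_nonzero[OF generic_pairD[of F N]]
  by (auto simp: topspace_CL_top topspace_RP3 cl_data_def)

lemma realizes_cl_data: "F \<in> generic N \<Longrightarrow> realizes N F (cl_data N F)"
  unfolding realizes_def
proof (intro ballI, clarify)
  fix i j assume gen: "F \<in> generic N" and p: "(i, j) \<in> pairs N"
  note frames = generic_pairD[OF gen p]
  have "common_line (F i) (F j) \<in> cl_data N F (i, j)"
    using p proj_class_self[OF common_line_nonzero[OF frames]] by (simp add: cl_data_def)
  moreover have "emb (F i) (fst (common_line (F i) (F j))) = emb (F j) (snd (common_line (F i) (F j)))"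
    using emb_common_line[OF frames(1,2)] by simp
  ultimately show "\<exists>(v, w)\<in>cl_data N F (i, j). emb (F i) v = emb (F j) w"
    by fastforce
qed

lemma realizes_mem_imp:
  assumes d: "d \<in> topspace (CL_top N)" and r: "realizes N F d" and p: "(i, j) \<in> pairs N"
    and y: "y \<in> d (i, j)"
  shows "emb (F i) (fst y) = emb (F j) (snd y)" "y \<noteq> 0"
proof -
  have "d (i, j) \<in> topspace RP3"
    using d p by (auto simp: topspace_CL_top)
  then obtain x where x: "x \<noteq> 0" "d (i, j) = proj_class x"
    by (rule topspace_RP3E)
  obtain v w where vw: "(v, w) \<in> d (i, j)" "emb (F i) v = emb (F j) w"
    using r p unfolding realizes_def by fastforce
  obtain c where c: "c \<noteq> 0" "(v, w) = c *\<^sub>R x"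
    using vw(1) x mem_proj_class by auto
  obtain c' where c': "c' \<noteq> 0" "y = c' *\<^sub>R x"
    using y x mem_proj_class by auto
  have "y = (c' / c) *\<^sub>R (v, w)"
    using c c' by simp
  then show "emb (F i) (fst y) = emb (F j) (snd y)"
    using vw(2) by (simp add: emb_scaleR)
  show "y \<noteq> 0"
    using c' x by simp
qed

lemma realizes_imp_eq_cl_data:
  assumes gen: "F \<in> generic N" and d: "d \<in> topspace (CL_top N)" and r: "realizes N F d"
  shows "d = cl_data N F"
proof
  fix p
  show "d p = cl_data N F p"
  proof (cases "p \<in> pairs N")
    case False
    then show ?thesis
      using PiE_arb[OF d[unfolded topspace_CL_top] False] by (simp add: cl_data_def)
  next
    case True
    then obtain i j where p: "p = (i, j)" "(i, j) \<in> pairs N"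
      by (cases p) auto
    note frames = generic_pairD[OF gen p(2)]
    have "d (i, j) \<in> topspace RP3"
      using d p by (auto simp: topspace_CL_top)
    then obtain x where x: "x \<noteq> 0" "d (i, j) = proj_class x"
      by (rule topspace_RP3E)
    have "emb (F i) (fst x) = emb (F j) (snd x)"
      using realizes_mem_imp[OF d r p(2)] proj_class_self[OF x(1)] x(2) by simp
    then obtain c where "(fst x, snd x) = c *\<^sub>R common_line (F i) (F j)"
      using realizing_pair_multiple_common_line[OF frames] by blast
    then have c: "x = c *\<^sub>R common_line (F i) (F j)"
      by simp
    then have "c \<noteq> 0"
      using x(1) by auto
    then have "d (i, j) = proj_class (common_line (F i) (F j))"
      using x c proj_class_scaleR[OF common_line_nonzero[OF frames]] by simp
    then show ?thesis
      using p by (simp add: cl_data_def)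
  qed
qed

lemma cl_data_valid:
  assumes gen: "F \<in> generic N"
  shows "cl_data N F \<in> valid_CL N"
proof -
  have "(norm v)\<^sup>2 = (norm w)\<^sup>2" if p: "(i, j) \<in> pairs N" and vw: "(v, w) \<in> cl_data N F (i, j)" for i j v w
  proof -
    note frames = generic_pairD[OF gen p]
    obtain c where "(v, w) = c *\<^sub>R common_line (F i) (F j)"
      using vw p mem_proj_class[OF common_line_nonzero[OF frames]] by (auto simp: cl_data_def)
    then have "v = c *\<^sub>R fst (common_line (F i) (F j))" "w = c *\<^sub>R snd (common_line (F i) (F j))"
      by (simp_all add: prod_eq_iff)
    moreover have "norm (fst (common_line (F i) (F j))) = norm (snd (common_line (F i) (F j)))"
      using norm_emb[OF frames(1)] norm_emb[OF frames(2)] emb_common_line[OF frames(1,2)] by metis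
    ultimately show ?thesis
      by simp
  qed
  then show ?thesis
    unfolding valid_CL_def using cl_data_in_topspace[OF gen] realizes_cl_data[OF gen] gen by fast
qed

lemma generic_act:
  assumes gen: "F \<in> generic N" and A: "orthogonal_matrix A"
  shows "(\<lambda>i\<in>{..<N}. act A (F i)) \<in> generic N"
proof -
  have inj: "inj (\<lambda>x. A *v x)"
    by (rule inj_orthogonal_matrix[OF A])
  have planes: "plane_of (act A (F i)) = plane_of (act A (F j)) \<longleftrightarrow> plane_of (F i) = plane_of (F j)"
    and lines: "plane_of (act A (F i)) \<inter> plane_of (act A (F j)) = plane_of (act A (F k)) \<inter> plane_of (act A (F l)) \<longleftrightarrow>
                plane_of (F i) \<inter> plane_of (F j) = plane_of (F k) \<inter> plane_of (F l)" for i j k l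
    unfolding plane_of_act image_Int[OF inj, symmetric] inj_image_eq_iff[OF inj] by (rule refl)+
  let ?G = "\<lambda>i\<in>{..<N}. act A (F i)"
  have G: "?G i = act A (F i)" if "i < N" for i
    using that by simp
  show ?thesis
    unfolding generic_def
  proof (intro CollectI conjI allI impI ballI)
    show "?G \<in> {..<N} \<rightarrow>\<^sub>E UNIV"
      by simp
    show "is_frame (?G i)" if "i < N" for i
      using that G is_frame_act[OF A] genericD(1)[OF gen] by simp
    show "plane_of (?G i) \<noteq> plane_of (?G j)" if "i < N" "j < N" "i \<noteq> j" for i j
      using that G genericD(2)[OF gen] planes by simp
    show "plane_of (?G (fst p)) \<inter> plane_of (?G (snd p)) \<noteq> plane_of (?G (fst q)) \<inter> plane_of (?G (snd q))"
      if "p \<in> pairs N" "q \<in> pairs N" "p \<noteq> q" for p q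
      using that G genericD(3)[OF gen] lines by (auto simp: pairs_def)
  qed
qed

lemma realizes_act:
  assumes "realizes N F d" "\<And>i. i < N \<Longrightarrow> F' i = act A (F i)"
  shows "realizes N F' d"
  unfolding realizes_def
proof (intro ballI, clarify)
  fix i j assume p: "(i, j) \<in> pairs N"
  then obtain v w where vw: "(v, w) \<in> d (i, j)" "emb (F i) v = emb (F j) w"
    using assms(1) unfolding realizes_def by fastforce
  have "i < N" "j < N"
    using p by (auto simp: pairs_def)
  then have "emb (F' i) v = emb (F' j) w"
    using assms(2) vw(2) by (simp add: emb_act)
  with vw(1) show "\<exists>(v, w)\<in>d (i, j). emb (F' i) v = emb (F' j) w"
    by blast
qed

lemma O3_rel_refl: "F \<in> generic N \<Longrightarrow> (F, F) \<in> O3_rel N"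
  unfolding O3_rel_def by (auto intro!: exI[of _ "mat 1"] simp: act_id orthogonal_matrix_id)

lemma O3_rel_sym:
  assumes "(F, F') \<in> O3_rel N"
  shows "(F', F) \<in> O3_rel N"
proof -
  obtain A where "F \<in> generic N" "F' \<in> generic N" "orthogonal_matrix A" "\<forall>i<N. F' i = act A (F i)"
    using assms unfolding O3_rel_def by blast
  then show ?thesis
    unfolding O3_rel_def by (auto intro!: exI[of _ "transpose A"] simp: act_transpose_act)
qed

lemma O3_rel_trans:
  assumes "(F, F') \<in> O3_rel N" "(F', F'') \<in> O3_rel N"
  shows "(F, F'') \<in> O3_rel N"
proof -
  obtain A B where "F \<in> generic N" "F'' \<in> generic N" "orthogonal_matrix A" "orthogonal_matrix B"
    "\<forall>i<N. F' i = act A (F i)" "\<forall>i<N. F'' i = act B (F' i)"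
    using assms unfolding O3_rel_def by blast
  then show ?thesis
    unfolding O3_rel_def by (auto intro!: exI[of _ "B ** A"] simp: act_act orthogonal_matrix_mul)
qed

lemma O3_rel_Image_eq: "(F, F') \<in> O3_rel N \<Longrightarrow> O3_rel N `` {F} = O3_rel N `` {F'}"
  using O3_rel_sym O3_rel_trans by blast

lemma cl_data_O3_rel:
  assumes "(F, F') \<in> O3_rel N"
  shows "cl_data N F' = cl_data N F"
proof -
  obtain A where A: "F \<in> generic N" "F' \<in> generic N" "\<forall>i<N. F' i = act A (F i)"
    using assms unfolding O3_rel_def by blast
  then have "realizes N F' (cl_data N F)"
    using realizes_act[OF realizes_cl_data[OF A(1)]] by blast
  then show ?thesis
    using realizes_imp_eq_cl_data[OF A(2) cl_data_in_topspace[OF A(1)]] by simp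
qed

theorem realizes_both_imp_O3_rel:
  assumes F: "F \<in> generic N" and F': "F' \<in> generic N" and N: "N \<ge> 3"
    and d: "d \<in> topspace (CL_top N)" and r: "realizes N F d" and r': "realizes N F' d"
  shows "(F, F') \<in> O3_rel N"
proof -
  define R where "R p = (SOME y. y \<in> d p)" for p
  have R: "realizing_reps N G R" if "realizes N G d" for G
    unfolding realizing_reps_def
  proof
    fix p assume p: "p \<in> pairs N"
    then have "R p \<in> d p"
      using d some_in_topspace_RP3 unfolding R_def by (auto simp: topspace_CL_top)
    then show "R p \<noteq> 0 \<and> emb (G (fst p)) (fst (R p)) = emb (G (snd p)) (snd (R p))"
      using realizes_mem_imp[OF d that, of "fst p" "snd p"] p by simp
  qed
  obtain A where A: "orthogonal_matrix A" "\<forall>k<N. rec_frame R k = act A (F k)"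
    using rec_frame_congruent[OF F N R[OF r]] by blast
  obtain B where B: "orthogonal_matrix B" "\<forall>k<N. rec_frame R k = act B (F' k)"
    using rec_frame_congruent[OF F' N R[OF r']] by blast
  have "F' k = act (transpose B ** A) (F k)" if "k < N" for k
    using A(2) B(2) that act_transpose_act[OF B(1), of "F' k"] by (simp add: act_act[symmetric])
  moreover have "orthogonal_matrix (transpose B ** A)"
    using A(1) B(1) by (simp add: orthogonal_matrix_mul)
  ultimately show ?thesis
    unfolding O3_rel_def using F F' by blast
qed

section \<open>The homeomorphism\<close>

lemma continuous_map_emb:
  "continuous_map X euclidean F \<Longrightarrow> continuous_map X euclidean v \<Longrightarrow>
   continuous_map X euclidean (\<lambda>x. emb (F x) (v x))"
  unfolding emb_def
  by (intro continuous_map_add continuous_map_scaleR continuous_map_vec_nth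
      continuous_map_euclidean_fst continuous_map_euclidean_snd)

lemma continuous_map_det2:
  "continuous_map X euclidean p \<Longrightarrow> continuous_map X euclidean q \<Longrightarrow>
   continuous_map X euclidean (\<lambda>x. det2 (p x) (q x))"
  unfolding det2_def by (intro continuous_map_diff continuous_map_real_mult continuous_map_vec_nth)

lemma continuous_map_frame_from_images:
  assumes "continuous_map X euclidean p" "continuous_map X euclidean q"
    "continuous_map X euclidean P" "continuous_map X euclidean Q"
    "\<And>x. x \<in> topspace X \<Longrightarrow> det2 (p x) (q x) \<noteq> 0"
  shows "continuous_map X euclidean (\<lambda>x. frame_from_images (p x) (q x) (P x) (Q x))"
  unfolding frame_from_images_def
  by (intro continuous_map_euclidean_Pair continuous_map_scaleR continuous_map_real_divide
      continuous_map_diff continuous_map_det2 continuous_map_vec_nth continuous_map_canonical_const assms)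

lemma continuous_map_common_line:
  "continuous_map X euclidean F1 \<Longrightarrow> continuous_map X euclidean F2 \<Longrightarrow>
   continuous_map X euclidean (\<lambda>x. common_line (F1 x) (F2 x))"
  unfolding common_line_def common_dir_def frame_normal_def
  by (intro continuous_map_euclidean_Pair continuous_map_vector2 continuous_map_inner
      continuous_map_cross3 continuous_map_euclidean_fst continuous_map_euclidean_snd)

lemma continuous_map_proj_class: "continuous_map (top_of_set (- {0})) RP3 proj_class"
  using quotient_imp_continuous_map[OF quotient_map_quotient_topology]
  unfolding RP3_def proj_class_def[abs_def] .

lemma topspace_generic: "topspace (subtopology (frames_top N) (generic N)) = generic N"
  by (auto simp: frames_top_def generic_def)

lemma continuous_map_cl_data:
  "continuous_map (subtopology (frames_top N) (generic N)) (CL_top N) (cl_data N)"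
  unfolding CL_top_def continuous_map_componentwise
proof (intro conjI ballI)
  show "cl_data N ` topspace (subtopology (frames_top N) (generic N)) \<subseteq> extensional (pairs N)"
    by (auto simp: cl_data_def)
  fix p assume p: "p \<in> pairs N"
  then obtain i j where ij: "p = (i, j)" "i < N" "j < N"
    by (cases p) (auto simp: pairs_def)
  have "continuous_map (frames_top N) euclidean (\<lambda>F. F k)" if "k < N" for k
    using continuous_map_product_projection[of k "{..<N}" "\<lambda>_. euclidean"] that by (simp add: frames_top_def)
  then have "continuous_map (subtopology (frames_top N) (generic N)) euclidean (\<lambda>F. common_line (F i) (F j))"
    using ij by (intro continuous_map_from_subtopology continuous_map_common_line)
  moreover have "common_line (F i) (F j) \<noteq> 0" if "F \<in> generic N" for F
    using common_line_nonzero[OF generic_pairD[OF that p[unfolded ij(1)]]] .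
  ultimately have "continuous_map (subtopology (frames_top N) (generic N)) (top_of_set (- {0}))
      (\<lambda>F. common_line (F i) (F j))"
    by (simp add: continuous_map_into_subtopology topspace_generic)
  from continuous_map_compose[OF this continuous_map_proj_class]
  show "continuous_map (subtopology (frames_top N) (generic N)) RP3 (\<lambda>F. cl_data N F p)"
    using p ij by (simp add: o_def cl_data_def)
qed

lemma continuous_map_rec_frame:
  assumes N: "N \<ge> 3" and k: "k < N"
    and R_cont: "\<And>p. continuous_map X euclidean (\<lambda>x. R x p)"
    and realizable: "\<And>x. x \<in> topspace X \<Longrightarrow> \<exists>F\<in>generic N. realizing_reps N F (R x)"
  shows "continuous_map X euclidean (\<lambda>x. rec_frame (R x) k)"
proof -
  note dets = realizing_reps_det2_nonzero[OF _ N]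
  have Rfst: "continuous_map X euclidean (\<lambda>x. fst (R x p))"
    and Rsnd: "continuous_map X euclidean (\<lambda>x. snd (R x p))" for p
    by (intro continuous_map_euclidean_fst continuous_map_euclidean_snd R_cont)+
  have "continuous_map X euclidean (\<lambda>x. rec_point (R x))"
    unfolding rec_point_def rec_coords_def Let_def fst_conv snd_conv
    using realizable dets(1)
    by (intro continuous_map_vector3 continuous_map_real_divide continuous_map_diff
        continuous_map_real_mult continuous_map_sqrt continuous_map_real_pow continuous_map_inner
        continuous_map_det2 continuous_map_vec_nth Rfst Rsnd) blast+
  then have frame1: "continuous_map X euclidean (\<lambda>x. rec_frame1 (R x))"
    unfolding rec_frame1_def using realizable dets(2)
    by (intro continuous_map_frame_from_images continuous_map_emb continuous_map_canonical_const Rfst Rsnd) blast+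
  show ?thesis
  proof (cases "k \<le> 1")
    case True
    then show ?thesis
      using frame1 by (cases "k = 0") (auto simp: rec_frame_def)
  next
    case False
    then have "2 \<le> k"
      by simp
    have "continuous_map X euclidean (\<lambda>x. frame_from_images (snd (R x (0, k))) (snd (R x (1, k)))
        (emb std_frame (fst (R x (0, k)))) (emb (rec_frame1 (R x)) (fst (R x (1, k)))))"
      using realizable dets(3)[OF _ _ \<open>2 \<le> k\<close> k]
      by (intro continuous_map_frame_from_images continuous_map_emb continuous_map_canonical_const
          frame1 Rfst Rsnd) blast
    then show ?thesis
      using False by (simp add: rec_frame_def)
  qed
qed

text \<open>Affine charts of RP^3: the classes not orthogonal to x0, with the representative y
normalized by y . x0 = 1.\<close>

definition chart :: "plane_vec \<times> plane_vec \<Rightarrow> (plane_vec \<times> plane_vec) set set" where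
  "chart x0 = {c \<in> topspace RP3. \<forall>y\<in>c. y \<bullet> x0 \<noteq> 0}"

definition chart_rep :: "plane_vec \<times> plane_vec \<Rightarrow> (plane_vec \<times> plane_vec) set \<Rightarrow> plane_vec \<times> plane_vec" where
  "chart_rep x0 c = (1 / ((SOME y. y \<in> c) \<bullet> x0)) *\<^sub>R (SOME y. y \<in> c)"

lemma proj_class_in_chart_iff:
  assumes "x \<noteq> 0"
  shows "proj_class x \<in> chart x0 \<longleftrightarrow> x \<bullet> x0 \<noteq> 0"
proof
  show "proj_class x \<in> chart x0 \<Longrightarrow> x \<bullet> x0 \<noteq> 0"
    using proj_class_self[OF assms] unfolding chart_def by blast
  show "x \<bullet> x0 \<noteq> 0 \<Longrightarrow> proj_class x \<in> chart x0"
    using assms by (auto simp: chart_def topspace_RP3 mem_proj_class)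
qed

lemma chartE:
  assumes "c \<in> chart x0"
  obtains x where "x \<noteq> 0" "x \<bullet> x0 \<noteq> 0" "c = proj_class x"
  using assms proj_class_in_chart_iff unfolding chart_def by (metis (no_types, lifting) mem_Collect_eq topspace_RP3E)

lemma chart_rep_proj_class:
  assumes "x \<noteq> 0" "x \<bullet> x0 \<noteq> 0"
  shows "chart_rep x0 (proj_class x) = (1 / (x \<bullet> x0)) *\<^sub>R x"
proof -
  obtain c where "c \<noteq> 0" "(SOME y. y \<in> proj_class x) = c *\<^sub>R x"
    using someI[of "\<lambda>y. y \<in> proj_class x", OF proj_class_self[OF assms(1)]] mem_proj_class[OF assms(1)]
    by blast
  then show ?thesis
    using assms(2) by (simp add: chart_rep_def)
qed

lemma chart_rep_mem: "c \<in> chart x0 \<Longrightarrow> chart_rep x0 c \<in> c"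
  by (erule chartE) (auto simp: chart_rep_proj_class mem_proj_class)

lemma mem_chart_some:
  assumes "c \<in> topspace RP3"
  shows "c \<in> chart (SOME y. y \<in> c)"
proof -
  obtain x where x: "x \<noteq> 0" "c = proj_class x"
    using assms by (rule topspace_RP3E)
  then obtain a where "a \<noteq> 0" "(SOME y. y \<in> c) = a *\<^sub>R x"
    using some_in_topspace_RP3[OF assms] mem_proj_class by blast
  then show ?thesis
    using x by (simp add: proj_class_in_chart_iff)
qed

lemma openin_chart: "openin RP3 (chart x0)"
  unfolding RP3_def openin_quotient_topology
proof
  show "chart x0 \<subseteq> (\<lambda>x. proj_rel `` {x}) ` topspace (top_of_set (- {0}))"
    using topspace_RP3 unfolding chart_def proj_class_def[abs_def] by auto
  have "{x \<in> topspace (top_of_set (- {0})). proj_rel `` {x} \<in> chart x0} = - {0} \<inter> {x. x \<bullet> x0 \<noteq> 0}"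
    using proj_class_in_chart_iff[of _ x0] unfolding proj_class_def by auto
  moreover have "open {x :: plane_vec \<times> plane_vec. x \<bullet> x0 \<noteq> 0}"
    by (intro open_Collect_neq continuous_intros)
  ultimately show "openin (top_of_set (- {0})) {x \<in> topspace (top_of_set (- {0})). proj_rel `` {x} \<in> chart x0}"
    by (simp add: openin_open_Int)
qed

lemma continuous_map_chart_rep: "continuous_map (subtopology RP3 (chart x0)) euclidean (chart_rep x0)"
  unfolding RP3_def
proof (rule continuous_map_from_open_in_quotient_topology)
  show "openin (quotient_topology (top_of_set (- {0})) proj_rel) (chart x0)"
    using openin_chart unfolding RP3_def .
  have eq: "{x \<in> topspace (top_of_set (- {0})). proj_rel `` {x} \<in> chart x0} = - {0} \<inter> {x. x \<bullet> x0 \<noteq> 0}"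
    using proj_class_in_chart_iff[of _ x0] unfolding proj_class_def by auto
  have "continuous_on (- {0} \<inter> {x. x \<bullet> x0 \<noteq> 0}) (\<lambda>x. (1 / (x \<bullet> x0)) *\<^sub>R x)"
    by (intro continuous_intros) auto
  then have "continuous_on (- {0} \<inter> {x. x \<bullet> x0 \<noteq> 0}) (\<lambda>x. chart_rep x0 (proj_rel `` {x}))"
    by (rule continuous_on_eq) (simp add: chart_rep_proj_class[unfolded proj_class_def])
  then show "continuous_map (subtopology (top_of_set (- {0}))
      {x \<in> topspace (top_of_set (- {0})). proj_rel `` {x} \<in> chart x0}) euclidean (\<lambda>x. chart_rep x0 (proj_rel `` {x}))"
    unfolding eq subtopology_subtopology by (simp add: Int_absorb1)
qed

definition cl_of_class :: "nat \<Rightarrow> (nat \<Rightarrow> frame) set \<Rightarrow> nat \<times> nat \<Rightarrow> (plane_vec \<times> plane_vec) set" where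
  "cl_of_class N c = cl_data N (SOME F. F \<in> c)"

definition class_of_cl :: "nat \<Rightarrow> (nat \<times> nat \<Rightarrow> (plane_vec \<times> plane_vec) set) \<Rightarrow> (nat \<Rightarrow> frame) set" where
  "class_of_cl N d = O3_rel N `` {SOME F. F \<in> generic N \<and> realizes N F d}"

lemma topspace_G_mod_O3: "topspace (G_mod_O3 N) = (\<lambda>F. O3_rel N `` {F}) ` generic N"
  unfolding G_mod_O3_def topspace_quotient_topology topspace_generic ..

lemma cl_of_class_Image:
  assumes "F \<in> generic N"
  shows "cl_of_class N (O3_rel N `` {F}) = cl_data N F"
proof -
  have "(F, SOME F'. F' \<in> O3_rel N `` {F}) \<in> O3_rel N"
    using someI[of "\<lambda>F'. F' \<in> O3_rel N `` {F}", OF ImageI[OF O3_rel_refl[OF assms] singletonI]] by simp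
  then show ?thesis
    unfolding cl_of_class_def by (rule cl_data_O3_rel)
qed

lemma continuous_map_cl_of_class:
  "continuous_map (G_mod_O3 N) (subtopology (CL_top N) (valid_CL N)) (cl_of_class N)"
  unfolding G_mod_O3_def
proof (rule continuous_map_from_quotient_topology)
  show "continuous_map (subtopology (frames_top N) (generic N)) (subtopology (CL_top N) (valid_CL N))
      (\<lambda>F. cl_of_class N (O3_rel N `` {F}))"
  proof (rule continuous_map_into_subtopology)
    show "continuous_map (subtopology (frames_top N) (generic N)) (CL_top N) (\<lambda>F. cl_of_class N (O3_rel N `` {F}))"
      using continuous_map_cl_data by (rule continuous_map_eq) (simp add: topspace_generic cl_of_class_Image)
    show "(\<lambda>F. cl_of_class N (O3_rel N `` {F})) \<in> topspace (subtopology (frames_top N) (generic N)) \<rightarrow> valid_CL N"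
      by (auto simp: topspace_generic cl_of_class_Image cl_data_valid)
  qed
qed

lemma valid_CL_some:
  assumes "d \<in> valid_CL N"
  shows "(SOME F. F \<in> generic N \<and> realizes N F d) \<in> generic N"
    "realizes N (SOME F. F \<in> generic N \<and> realizes N F d) d"
proof -
  have "\<exists>F. F \<in> generic N \<and> realizes N F d"
    using assms unfolding valid_CL_def by blast
  then show "(SOME F. F \<in> generic N \<and> realizes N F d) \<in> generic N"
    "realizes N (SOME F. F \<in> generic N \<and> realizes N F d) d"
    by (metis (mono_tags, lifting) someI_ex)+
qed

lemma rec_frame_O3_rel:
  assumes gen: "F \<in> generic N" and N: "N \<ge> 3" and R: "realizing_reps N F R"
  shows "(F, \<lambda>k\<in>{..<N}. rec_frame R k) \<in> O3_rel N"
proof -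
  obtain A where A: "orthogonal_matrix A" "\<forall>k<N. rec_frame R k = act A (F k)"
    using rec_frame_congruent[OF gen N R] by blast
  then have "(\<lambda>k\<in>{..<N}. rec_frame R k) = (\<lambda>k\<in>{..<N}. act A (F k))"
    by auto
  with generic_act[OF gen A(1)] A show ?thesis
    unfolding O3_rel_def using gen by auto
qed

definition chart_box :: "nat \<Rightarrow> reps \<Rightarrow> (nat \<times> nat \<Rightarrow> (plane_vec \<times> plane_vec) set) set" where
  "chart_box N x0 = PiE (pairs N) (\<lambda>p. chart (x0 p))"

definition chart_reps :: "nat \<Rightarrow> reps \<Rightarrow> (nat \<times> nat \<Rightarrow> (plane_vec \<times> plane_vec) set) \<Rightarrow> reps" where
  "chart_reps N x0 d p = (if p \<in> pairs N then chart_rep (x0 p) (d p) else 0)"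

lemma finite_pairs: "finite (pairs N)"
  by (rule finite_subset[of _ "{..<N} \<times> {..<N}"]) (auto simp: pairs_def)

lemma openin_chart_box: "openin (CL_top N) (chart_box N x0)"
  unfolding CL_top_def chart_box_def openin_PiE_gen
  by (intro disjI2 conjI ballI openin_chart) (rule finite_subset[OF _ finite_pairs], blast)

lemma mem_chart_box_some: "d \<in> topspace (CL_top N) \<Longrightarrow> d \<in> chart_box N (\<lambda>p. SOME y. y \<in> d p)"
  by (auto simp: chart_box_def topspace_CL_top PiE_iff intro!: mem_chart_some)

lemma continuous_map_chart_reps:
  "continuous_map (subtopology (CL_top N) (chart_box N x0)) euclidean (\<lambda>d. chart_reps N x0 d p)"
proof (cases "p \<in> pairs N")
  case True
  have "continuous_map (subtopology (CL_top N) (chart_box N x0)) RP3 (\<lambda>d. d p)"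
    unfolding CL_top_def
    by (intro continuous_map_from_subtopology continuous_map_product_projection True)
  then have "continuous_map (subtopology (CL_top N) (chart_box N x0)) (subtopology RP3 (chart (x0 p))) (\<lambda>d. d p)"
    using True by (auto simp: continuous_map_in_subtopology chart_box_def)
  from continuous_map_compose[OF this continuous_map_chart_rep] show ?thesis
    using True by (simp add: chart_reps_def o_def)
qed (simp add: chart_reps_def)

lemma realizing_reps_chart_reps:
  assumes "d \<in> topspace (CL_top N)" "d \<in> chart_box N x0" "realizes N F d"
  shows "realizing_reps N F (chart_reps N x0 d)"
  unfolding realizing_reps_def
proof
  fix p assume p: "p \<in> pairs N"
  then have "chart_reps N x0 d p \<in> d p"
    using chart_rep_mem[OF PiE_mem[OF assms(2)[unfolded chart_box_def] p]] by (simp add: chart_reps_def)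
  then show "chart_reps N x0 d p \<noteq> 0 \<and>
      emb (F (fst p)) (fst (chart_reps N x0 d p)) = emb (F (snd p)) (snd (chart_reps N x0 d p))"
    using realizes_mem_imp[OF assms(1,3), of "fst p" "snd p"] p by simp
qed

lemma class_of_cl_chart_reps:
  assumes N: "N \<ge> 3" and d: "d \<in> valid_CL N" "d \<in> chart_box N x0"
  defines "F' \<equiv> \<lambda>k\<in>{..<N}. rec_frame (chart_reps N x0 d) k"
  shows "F' \<in> generic N" "class_of_cl N d = O3_rel N `` {F'}"
proof -
  note F = valid_CL_some[OF d(1)]
  have top: "d \<in> topspace (CL_top N)"
    using d(1) by (simp add: valid_CL_def)
  have rel: "(SOME F. F \<in> generic N \<and> realizes N F d, F') \<in> O3_rel N"
    unfolding F'_def using rec_frame_O3_rel[OF F(1) N realizing_reps_chart_reps[OF top d(2) F(2)]] .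
  then show "F' \<in> generic N"
    by (simp add: O3_rel_def)
  show "class_of_cl N d = O3_rel N `` {F'}"
    unfolding class_of_cl_def using O3_rel_Image_eq[OF rel] .
qed

lemma continuous_map_class_of_cl_chart_box:
  assumes N: "N \<ge> 3"
  shows "continuous_map (subtopology (CL_top N) (valid_CL N \<inter> chart_box N x0)) (G_mod_O3 N) (class_of_cl N)"
proof -
  let ?Y = "subtopology (CL_top N) (valid_CL N \<inter> chart_box N x0)"
  let ?F' = "\<lambda>d. \<lambda>k\<in>{..<N}. rec_frame (chart_reps N x0 d) k"
  have topY: "topspace ?Y = valid_CL N \<inter> chart_box N x0"
    by (auto simp: valid_CL_def)
  have box: "chart_box N x0 \<inter> (valid_CL N \<inter> chart_box N x0) = valid_CL N \<inter> chart_box N x0"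
    by blast
  have "continuous_map (subtopology (subtopology (CL_top N) (chart_box N x0)) (valid_CL N \<inter> chart_box N x0))
      euclidean (\<lambda>d. chart_reps N x0 d p)" for p
    by (rule continuous_map_from_subtopology[OF continuous_map_chart_reps])
  then have reps: "continuous_map ?Y euclidean (\<lambda>d. chart_reps N x0 d p)" for p
    by (simp add: subtopology_subtopology box)
  have realizable: "\<exists>F\<in>generic N. realizing_reps N F (chart_reps N x0 d)" if "d \<in> topspace ?Y" for d
  proof -
    have d: "d \<in> valid_CL N" "d \<in> chart_box N x0"
      using that topY by auto
    then obtain F where "F \<in> generic N" "realizes N F d"
      unfolding valid_CL_def by blast
    with d show ?thesis
      using realizing_reps_chart_reps[of d N x0 F] by (auto simp: valid_CL_def)
  qed
  have "continuous_map ?Y (frames_top N) ?F'"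
    unfolding frames_top_def continuous_map_componentwise
    using continuous_map_rec_frame[OF N _ reps realizable] by auto
  then have "continuous_map ?Y (subtopology (frames_top N) (generic N)) ?F'"
    using class_of_cl_chart_reps(1)[OF N] by (auto simp: continuous_map_in_subtopology topY)
  from continuous_map_compose[OF this quotient_imp_continuous_map[OF quotient_map_quotient_topology]]
  have "continuous_map ?Y (G_mod_O3 N) (\<lambda>d. O3_rel N `` {?F' d})"
    by (simp add: G_mod_O3_def o_def)
  then show ?thesis
    by (rule continuous_map_eq) (use class_of_cl_chart_reps(2)[OF N] in \<open>auto simp: topY\<close>)
qed

lemma continuous_map_class_of_cl:
  assumes N: "N \<ge> 3"
  shows "continuous_map (subtopology (CL_top N) (valid_CL N)) (G_mod_O3 N) (class_of_cl N)"
proof (rule continuous_map_locally)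
  fix d assume "d \<in> topspace (subtopology (CL_top N) (valid_CL N))"
  then have d: "d \<in> valid_CL N" "d \<in> topspace (CL_top N)"
    by (auto simp: valid_CL_def)
  let ?U = "valid_CL N \<inter> chart_box N (\<lambda>p. SOME y. y \<in> d p)"
  have "openin (subtopology (CL_top N) (valid_CL N)) ?U"
    using openin_subtopology_Int2[OF openin_chart_box] by (simp add: inf.commute)
  moreover have "continuous_map (subtopology (subtopology (CL_top N) (valid_CL N)) ?U) (G_mod_O3 N) (class_of_cl N)"
    using continuous_map_class_of_cl_chart_box[OF N] by (simp add: subtopology_subtopology Int_absorb1)
  ultimately show "\<exists>U. openin (subtopology (CL_top N) (valid_CL N)) U \<and> d \<in> U \<and>
      continuous_map (subtopology (subtopology (CL_top N) (valid_CL N)) U) (G_mod_O3 N) (class_of_cl N)"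
    using d mem_chart_box_some by blast
qed

lemma cl_of_class_class_of_cl: "d \<in> valid_CL N \<Longrightarrow> cl_of_class N (class_of_cl N d) = d"
  unfolding class_of_cl_def cl_of_class_Image[OF valid_CL_some(1)]
  using realizes_imp_eq_cl_data[OF valid_CL_some(1) _ valid_CL_some(2)] by (simp add: valid_CL_def)

lemma class_of_cl_cl_of_class:
  assumes N: "N \<ge> 3" and c: "c \<in> topspace (G_mod_O3 N)"
  shows "class_of_cl N (cl_of_class N c) = c"
proof -
  obtain F where F: "F \<in> generic N" "c = O3_rel N `` {F}"
    using c by (auto simp: topspace_G_mod_O3)
  note F' = valid_CL_some[OF cl_data_valid[OF F(1)]]
  show ?thesis
    unfolding F(2) cl_of_class_Image[OF F(1)] class_of_cl_def
    using O3_rel_Image_eq[OF realizes_both_imp_O3_rel[OF F(1) F'(1) N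
          cl_data_in_topspace[OF F(1)] realizes_cl_data[OF F(1)] F'(2)]] by simp
qed

theorem corollary1:
  fixes N :: nat
  assumes "N \<ge> 3"
  shows "subtopology (CL_top N) (valid_CL N) homeomorphic_space G_mod_O3 N"
proof -
  have "homeomorphic_maps (subtopology (CL_top N) (valid_CL N)) (G_mod_O3 N) (class_of_cl N) (cl_of_class N)"
    unfolding homeomorphic_maps_def
    using continuous_map_class_of_cl[OF assms] continuous_map_cl_of_class
      cl_of_class_class_of_cl class_of_cl_cl_of_class[OF assms] by auto
  then show ?thesis
    by (rule homeomorphic_maps_imp_homeomorphic_space)
qed

end
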